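(* Let $F=(T_1,\dots,T_b)$ be a tree ensemble with input dimension $n$ and output dimension $m$ in which every leaf region is a box, and write $T_r=\{(X_{r,1},\bar y_{r,1}),\dots,(X_{r,k_r},\bar y_{r,k_r})\}$. Let $\hat X$ be a box none of whose components is $\bot$. For every choice of indices $(j_1,\dots,j_b)$ with $1\le j_r\le k_r$, put $$\hat Y_{j_1,\dots,j_b}=\hat X\sqcap\alpha_n(X_{1,j_1})\sqcap\dots\sqcap\alpha_n(X_{b,j_b}).$$ Then (i) whenever no component of $\hat Y_{j_1,\dots,j_b}$ is $\bot$, the set $\gamma_m\big(\hat f(\hat Y_{j_1,\dots,j_b};F)\big)$ has exactly one element; and (ii) the sets $\gamma_n(\hat Y_{j_1,\dots,j_b})$, over those index choices for which no component of $\hat Y_{j_1,\dots,j_b}$ is $\bot$, are pairwise disjoint and their union is $\gamma_n(\hat X)$.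
   Context: Setting (interval abstract interpretation). $\mathcal{D}\subset\mathbb{R}$ is a fixed finite nonempty set, ordered by $\le$. Input intervals: $\bot$ and $[l,u]$ with $l,u\in\mathcal D$, $l\le u$; $\gamma([l,u])=\{v\in\mathcal D:l\le v\le u\}$, $\gamma(\bot)=\emptyset$; $\alpha(V)=[\min V,\max V]$ for nonempty $V\subseteq\mathcal D$, $\alpha(\emptyset)=\bot$; meet $[l,u]\sqcap[l',u']=\bot$ if $\max(l,l')>\min(u,u')$, else $[\max(l,l'),\min(u,u')]$; $\bot\sqcap\hat v=\bot$. Output (real) intervals: $\bot$ and $[l,u]$, $l\le u$ real; $\gamma([l,u])=\{v\in\mathbb R:l\le v\le u\}$; $\alpha(V)=[\min V,\max V]$ for finite nonempty $V\subset\mathbb R$, $\alpha(\emptyset)=\bot$; $[a,b]+[c,d]=[a+c,b+d]$, $\bot+\hat v=\bot$. For sets of tuples $\alpha_n(X)=(\alpha(\pi_1X),\dots,\alpha(\pi_nX))$; a box is a tuple $(\hat x_1,\dots,\hat x_n)$ of input intervals, with $\gamma_n(\hat x_1,\dots,\hat x_n)=\prod_i\gamma(\hat x_i)$; meet of boxes componentwise; "$\hat X\sqcap\hat Y\ne\bot$" means no component is $\bot$. $\alpha_m,\gamma_m$ on $\mathbb R^m$ are componentwise likewise. Decision tree $T=\{(X_1,\bar y_1),\dots,(X_k,\bar y_k)\}$: $X_1,\dots,X_k$ partition $\mathcal D^n$, $\bar y_j\in\mathbb R^m$; $t(\bar x;T)=\bar y_j$ iff $\bar x\in X_j$; tree transformer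 $\hat t(\hat X;T)=\alpha_m(\{\bar y_j:\hat X\sqcap\alpha_n(X_j)\ne\bot\})$. A leaf region $X_j$ is a box if $X_j=\gamma_n(\alpha_n(X_j))$ (i.e. it is a product of sets of the form $\{v\in\mathcal D:l\le v\le u\}$); this holds for trees with univariate threshold rules. Ensemble $F=(T_1,\dots,T_b)$: $f(\bar x;F)=\sum_i t(\bar x;T_i)$, ensemble transformer $\hat f(\hat X;F)=\sum_i\hat t(\hat X;T_i)$. *)

theory Defs
  imports Complex_Main
begin

text \<open>Intervals (input and output) are represented as (real \<times> real) option:
  None is bottom, Some (l,u) is [l,u].\<close>

type_synonym ival = "(real \<times> real) option"
type_synonym box = "ival list"
type_synonym tree = "(real list set \<times> real list) list"
type_synonym ensemble = "tree list"

definition gamma_in :: "real set \<Rightarrow> ival \<Rightarrow> real set" where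
  "gamma_in D iv = (case iv of None \<Rightarrow> {} | Some (l,u) \<Rightarrow> {v\<in>D. l \<le> v \<and> v \<le> u})"

definition gamma_out :: "ival \<Rightarrow> real set" where
  "gamma_out iv = (case iv of None \<Rightarrow> {} | Some (l,u) \<Rightarrow> {v. l \<le> v \<and> v \<le> u})"

definition alpha :: "real set \<Rightarrow> ival" where
  "alpha V = (if V = {} then None else Some (Min V, Max V))"

fun meet :: "ival \<Rightarrow> ival \<Rightarrow> ival" where
  "meet None _ = None"
| "meet _ None = None"
| "meet (Some (l,u)) (Some (l',u')) =
     (if max l l' > min u u' then None else Some (max l l', min u u'))"

fun iadd :: "ival \<Rightarrow> ival \<Rightarrow> ival" where
  "iadd None _ = None"
| "iadd _ None = None"
| "iadd (Some (a,b)) (Some (c,d)) = Some (a + c, b + d)"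

definition is_input_ival :: "real set \<Rightarrow> ival \<Rightarrow> bool" where
  "is_input_ival D iv = (case iv of None \<Rightarrow> True
      | Some (l,u) \<Rightarrow> l \<in> D \<and> u \<in> D \<and> l \<le> u)"

definition points :: "real set \<Rightarrow> nat \<Rightarrow> real list set" where
  "points D n = {x. length x = n \<and> set x \<subseteq> D}"

definition alpha_n :: "nat \<Rightarrow> real list set \<Rightarrow> box" where
  "alpha_n n X = map (\<lambda>i. alpha ((\<lambda>x. x ! i) ` X)) [0..<n]"

definition gamma_n :: "real set \<Rightarrow> box \<Rightarrow> real list set" where
  "gamma_n D B = {x. length x = length B \<and> (\<forall>i<length B. x ! i \<in> gamma_in D (B ! i))}"

definition gamma_m :: "box \<Rightarrow> real list set" where
  "gamma_m B = {y. length y = length B \<and> (\<forall>i<length B. y ! i \<in> gamma_out (B ! i))}"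

definition meet_box :: "box \<Rightarrow> box \<Rightarrow> box" where
  "meet_box A B = map2 meet A B"

definition nonbot :: "box \<Rightarrow> bool" where
  "nonbot B = (\<forall>c\<in>set B. c \<noteq> None)"

definition is_input_box :: "real set \<Rightarrow> nat \<Rightarrow> box \<Rightarrow> bool" where
  "is_input_box D n B = (length B = n \<and> (\<forall>c\<in>set B. is_input_ival D c))"

definition is_tree :: "real set \<Rightarrow> nat \<Rightarrow> nat \<Rightarrow> tree \<Rightarrow> bool" where
  "is_tree D n m T =
     ((\<forall>j<length T. fst (T ! j) \<noteq> {} \<and> length (snd (T ! j)) = m) \<and>
      (\<forall>i<length T. \<forall>j<length T. i \<noteq> j \<longrightarrow> fst (T ! i) \<inter> fst (T ! j) = {}) \<and>
      (\<Union>j<length T. fst (T ! j)) = points D n)"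

definition leaves_are_boxes :: "real set \<Rightarrow> nat \<Rightarrow> tree \<Rightarrow> bool" where
  "leaves_are_boxes D n T = (\<forall>j<length T. fst (T ! j) = gamma_n D (alpha_n n (fst (T ! j))))"

definition alpha_m :: "nat \<Rightarrow> real list set \<Rightarrow> box" where
  "alpha_m m Y = map (\<lambda>i. alpha ((\<lambda>y. y ! i) ` Y)) [0..<m]"

definition tree_hat :: "nat \<Rightarrow> nat \<Rightarrow> box \<Rightarrow> tree \<Rightarrow> box" where
  "tree_hat n m B T =
     alpha_m m {snd (T ! j) | j. j < length T \<and> nonbot (meet_box B (alpha_n n (fst (T ! j))))}"

definition ens_hat :: "nat \<Rightarrow> nat \<Rightarrow> box \<Rightarrow> ensemble \<Rightarrow> box" where
  "ens_hat n m B F = foldr (\<lambda>T acc. map2 iadd (tree_hat n m B T) acc) F (replicate m (Some (0, 0)))"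

definition index_choices :: "ensemble \<Rightarrow> nat list set" where
  "index_choices F = {js. length js = length F \<and> (\<forall>r<length F. js ! r < length (F ! r))}"

definition Yhat :: "nat \<Rightarrow> ensemble \<Rightarrow> box \<Rightarrow> nat list \<Rightarrow> box" where
  "Yhat n F Xh js = foldl (\<lambda>acc r. meet_box acc (alpha_n n (fst ((F ! r) ! (js ! r))))) Xh [0..<length F]"

end

theory Submission
  imports Defs
begin

text \<open>Each \<open>Y\<^sub>j\<close> is contained in the leaf \<open>X\<^sub>r\<^sub>,\<^sub>j\<^sub>r\<close> of every tree, so
  every tree transformer sees exactly one leaf and returns a degenerate interval; the
  ensemble output is then a single point. Since leaves are boxes, \<open>\<gamma>\<^sub>n(Y\<^sub>j)\<close> is exactly
  \<open>\<gamma>\<^sub>n(X) \<inter> X\<^sub>1\<^sub>,\<^sub>j\<^sub>1 \<inter> \<dots> \<inter> X\<^sub>b\<^sub>,\<^sub>j\<^sub>b\<close>, and because the leaves of each tree partition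
  \<open>D\<^sup>n\<close> these sets partition \<open>\<gamma>\<^sub>n(X)\<close>.\<close>

lemma gamma_in_meet: "gamma_in D (meet a b) = gamma_in D a \<inter> gamma_in D b"
  by (induction a b rule: meet.induct) (auto simp: gamma_in_def)

lemma is_input_ival_meet:
  "is_input_ival D a \<Longrightarrow> is_input_ival D b \<Longrightarrow> is_input_ival D (meet a b)"
  by (induction a b rule: meet.induct) (auto simp: is_input_ival_def max_def min_def)

lemma gamma_n_meet_box:
  "length A = length B \<Longrightarrow> gamma_n D (meet_box A B) = gamma_n D A \<inter> gamma_n D B"
  by (auto simp: gamma_n_def meet_box_def gamma_in_meet)

lemma is_input_box_meet_box:
  "is_input_box D n A \<Longrightarrow> is_input_box D n B \<Longrightarrow> is_input_box D n (meet_box A B)"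
  by (auto simp: is_input_box_def meet_box_def set_zip intro!: is_input_ival_meet)

lemma gamma_n_subset_points: "gamma_n D B \<subseteq> points D (length B)"
proof
  fix x assume x: "x \<in> gamma_n D B"
  have "x ! i \<in> D" if "i < length x" for i
    using x that by (cases "B ! i") (auto simp: gamma_n_def gamma_in_def)
  then show "x \<in> points D (length B)"
    using x by (auto simp: points_def gamma_n_def in_set_conv_nth)
qed

lemma nonbot_if_gamma_n_nonempty:
  assumes "gamma_n D B \<noteq> {}" shows "nonbot B"
  unfolding nonbot_def
proof
  fix c assume "c \<in> set B"
  then obtain i where i: "i < length B" "c = B ! i" by (auto simp: in_set_conv_nth)
  obtain x where "x \<in> gamma_n D B" using assms by blast
  then have "x ! i \<in> gamma_in D c" using i by (simp add: gamma_n_def)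
  then show "c \<noteq> None" by (cases c) (auto simp: gamma_in_def)
qed

lemma gamma_n_nonempty_iff_nonbot:
  assumes "is_input_box D n B"
  shows "gamma_n D B \<noteq> {} \<longleftrightarrow> nonbot B"
proof
  assume nonbot: "nonbot B"
  have "fst (the (B ! i)) \<in> gamma_in D (B ! i)" if "i < length B" for i
  proof -
    have mem: "B ! i \<in> set B" using that by simp
    then have "B ! i \<noteq> None" using nonbot by (simp add: nonbot_def)
    then obtain l u where lu: "B ! i = Some (l, u)" by auto
    with mem have "l \<in> D" "l \<le> u"
      using assms by (force simp: is_input_box_def is_input_ival_def)+
    then show ?thesis by (simp add: lu gamma_in_def)
  qed
  then have "map (\<lambda>c. fst (the c)) B \<in> gamma_n D B" by (simp add: gamma_n_def)
  then show "gamma_n D B \<noteq> {}" by blast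
qed (rule nonbot_if_gamma_n_nonempty)

lemma is_input_box_alpha_n:
  assumes "finite D" "X \<noteq> {}" "X \<subseteq> points D n"
  shows "is_input_box D n (alpha_n n X)"
proof -
  have "finite X"
    using assms finite_subset finite_lists_length_eq[of D n]
    by (auto simp: points_def conj_commute)
  have "is_input_ival D (alpha ((\<lambda>x. x ! i) ` X))" if "i < n" for i
  proof -
    let ?V = "(\<lambda>x. x ! i) ` X"
    have V: "finite ?V" "?V \<noteq> {}" using \<open>finite X\<close> assms(2) by auto
    have "?V \<subseteq> D" using assms(3) that by (auto simp: points_def dest!: nth_mem)
    then show ?thesis
      using Min_in[OF V] Max_in[OF V] Min_le[OF V(1) Max_in[OF V]] V(2)
      by (auto simp: alpha_def is_input_ival_def)
  qed
  then show ?thesis by (auto simp: is_input_box_def alpha_n_def)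
qed

lemma is_tree_leaf_unique:
  "is_tree D n m T \<Longrightarrow> i < length T \<Longrightarrow> j < length T \<Longrightarrow>
   x \<in> fst (T ! i) \<Longrightarrow> x \<in> fst (T ! j) \<Longrightarrow> i = j"
  unfolding is_tree_def by blast

lemma is_tree_leaf_exists:
  "is_tree D n m T \<Longrightarrow> x \<in> points D n \<Longrightarrow> \<exists>j<length T. x \<in> fst (T ! j)"
  unfolding is_tree_def by blast

lemma is_input_box_leaf:
  "finite D \<Longrightarrow> is_tree D n m T \<Longrightarrow> j < length T \<Longrightarrow>
   is_input_box D n (alpha_n n (fst (T ! j)))"
  unfolding is_tree_def by (intro is_input_box_alpha_n) auto

lemma is_input_box_foldl_meet_box:
  "(\<And>r. r \<in> set rs \<Longrightarrow> is_input_box D n (g r)) \<Longrightarrow> is_input_box D n B \<Longrightarrow>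
   is_input_box D n (foldl (\<lambda>acc r. meet_box acc (g r)) B rs)"
  by (induction rs arbitrary: B) (auto simp: is_input_box_meet_box)

lemma gamma_n_foldl_meet_box:
  "(\<And>r. r \<in> set rs \<Longrightarrow> is_input_box D n (g r)) \<Longrightarrow> is_input_box D n B \<Longrightarrow>
   gamma_n D (foldl (\<lambda>acc r. meet_box acc (g r)) B rs)
     = gamma_n D B \<inter> (\<Inter>r\<in>set rs. gamma_n D (g r))"
proof (induction rs arbitrary: B)
  case (Cons r rs)
  have "length B = length (g r)" using Cons.prems by (simp add: is_input_box_def)
  then show ?case using Cons by (auto simp: is_input_box_meet_box gamma_n_meet_box)
qed simp

definition point_box :: "real list \<Rightarrow> box" where
  "point_box y = map (\<lambda>v. Some (v, v)) y"

lemma gamma_m_point_box: "gamma_m (point_box y) = {y}"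
  by (force simp: gamma_m_def gamma_out_def point_box_def intro!: nth_equalityI
      intro: order_antisym)

lemma alpha_m_singleton: "length y = m \<Longrightarrow> alpha_m m {y} = point_box y"
  by (auto simp: alpha_m_def alpha_def point_box_def intro: nth_equalityI)

lemma map2_iadd_point_box:
  "length y = length s \<Longrightarrow> map2 iadd (point_box y) (point_box s) = point_box (map2 (+) y s)"
  by (induction y s rule: list_induct2) (auto simp: point_box_def)

lemma length_foldr_map2_plus:
  "(\<And>x. x \<in> set xs \<Longrightarrow> length (y x) = m) \<Longrightarrow>
   length (foldr (\<lambda>x acc. map2 (+) (y x) acc) xs (replicate m 0)) = m"
  by (induction xs) auto

lemma ens_hat_point_box:
  assumes "\<And>T. T \<in> set F \<Longrightarrow> length (y T) = m \<and> tree_hat n m B T = point_box (y T)"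
  shows "ens_hat n m B F = point_box (foldr (\<lambda>T acc. map2 (+) (y T) acc) F (replicate m 0))"
  using assms
proof (induction F)
  case Nil show ?case by (simp add: ens_hat_def point_box_def)
next
  case (Cons T F)
  have "length (foldr (\<lambda>T acc. map2 (+) (y T) acc) F (replicate m 0)) = m"
    using Cons.prems by (intro length_foldr_map2_plus) auto
  then show ?case using Cons by (simp add: ens_hat_def map2_iadd_point_box)
qed

text \<open>A box whose concretisation lies inside one leaf meets no other leaf, as leaves are
  disjoint and their abstractions are exact.\<close>
lemma tree_hat_within_leaf:
  assumes "finite D" "is_tree D n m T" "leaves_are_boxes D n T" "is_input_box D n B"
    and "gamma_n D B \<noteq> {}" "j0 < length T" "gamma_n D B \<subseteq> fst (T ! j0)"
  shows "tree_hat n m B T = point_box (snd (T ! j0))"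
proof -
  have "nonbot (meet_box B (alpha_n n (fst (T ! j)))) \<longleftrightarrow> j = j0" if j: "j < length T" for j
  proof -
    have ib: "is_input_box D n (alpha_n n (fst (T ! j)))"
      using is_input_box_leaf[OF assms(1,2) j] .
    then have "gamma_n D (meet_box B (alpha_n n (fst (T ! j)))) = gamma_n D B \<inter> fst (T ! j)"
      using assms(3,4) j by (simp add: gamma_n_meet_box is_input_box_def leaves_are_boxes_def)
    moreover have "gamma_n D B \<inter> fst (T ! j) \<noteq> {} \<longleftrightarrow> j = j0"
      using is_tree_leaf_unique[OF assms(2) j assms(6)] assms(5,7) by blast
    ultimately show ?thesis
      using gamma_n_nonempty_iff_nonbot[OF is_input_box_meet_box[OF assms(4) ib]] by simp
  qed
  then have "{snd (T ! j) | j. j < length T \<and> nonbot (meet_box B (alpha_n n (fst (T ! j))))}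
               = {snd (T ! j0)}"
    using assms(6) by auto
  then show ?thesis
    using assms(2,6) by (simp add: tree_hat_def alpha_m_singleton is_tree_def)
qed

lemma index_choice_exists:
  assumes "\<And>r. r < length F \<Longrightarrow> \<exists>j<length (F ! r). P r j"
  shows "\<exists>js\<in>index_choices F. \<forall>r<length F. P r (js ! r)"
proof -
  define js where "js = map (\<lambda>r. SOME j. j < length (F ! r) \<and> P r j) [0..<length F]"
  have "js ! r < length (F ! r) \<and> P r (js ! r)" if "r < length F" for r
    using someI_ex[OF assms[OF that]] that by (simp add: js_def)
  moreover have "length js = length F" by (simp add: js_def)
  ultimately show ?thesis by (auto simp: index_choices_def)
qed

context
  fixes D :: "real set" and n m :: nat and F :: ensemble and Xh :: box
  assumes finite_D: "finite D"
    and trees: "\<forall>T\<in>set F. is_tree D n m T \<and> leaves_are_boxes D n T"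
    and input_Xh: "is_input_box D n Xh"
begin

lemma index_choice_leaf:
  assumes "js \<in> index_choices F" "r < length F"
  shows "is_tree D n m (F ! r)" "js ! r < length (F ! r)"
    "gamma_n D (alpha_n n (fst ((F ! r) ! (js ! r)))) = fst ((F ! r) ! (js ! r))"
  using assms trees by (auto simp: index_choices_def leaves_are_boxes_def)

lemma
  assumes "js \<in> index_choices F"
  shows is_input_box_Yhat: "is_input_box D n (Yhat n F Xh js)"
    and gamma_n_Yhat:
      "gamma_n D (Yhat n F Xh js) = gamma_n D Xh \<inter> (\<Inter>r<length F. fst ((F ! r) ! (js ! r)))"
proof -
  let ?g = "\<lambda>r. alpha_n n (fst ((F ! r) ! (js ! r)))"
  have g: "is_input_box D n (?g r)" if "r \<in> set [0..<length F]" for r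
    using that index_choice_leaf(1,2)[OF assms] by (auto intro: is_input_box_leaf[OF finite_D])
  show "is_input_box D n (Yhat n F Xh js)"
    unfolding Yhat_def by (rule is_input_box_foldl_meet_box[OF g input_Xh])
  have "gamma_n D (Yhat n F Xh js)
      = gamma_n D Xh \<inter> (\<Inter>r\<in>set [0..<length F]. gamma_n D (?g r))"
    unfolding Yhat_def by (rule gamma_n_foldl_meet_box[OF g input_Xh])
  also have "\<dots> = gamma_n D Xh \<inter> (\<Inter>r<length F. fst ((F ! r) ! (js ! r)))"
    using index_choice_leaf(3)[OF assms] by (simp add: atLeast0LessThan)
  finally show "gamma_n D (Yhat n F Xh js)
      = gamma_n D Xh \<inter> (\<Inter>r<length F. fst ((F ! r) ! (js ! r)))" .
qed

lemma Yhat_disjoint: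
  assumes "js \<in> index_choices F" "js' \<in> index_choices F" "js \<noteq> js'"
  shows "gamma_n D (Yhat n F Xh js) \<inter> gamma_n D (Yhat n F Xh js') = {}"
proof -
  have "length js = length F" "length js' = length F"
    using assms(1,2) by (simp_all add: index_choices_def)
  then obtain r where r: "r < length F" "js ! r \<noteq> js' ! r"
    using assms(3) nth_equalityI[of js js'] by auto
  have "gamma_n D (Yhat n F Xh js) \<subseteq> fst ((F ! r) ! (js ! r))"
    and "gamma_n D (Yhat n F Xh js') \<subseteq> fst ((F ! r) ! (js' ! r))"
    using gamma_n_Yhat[OF assms(1)] gamma_n_Yhat[OF assms(2)] r(1) by auto
  then show ?thesis
    using is_tree_leaf_unique[OF index_choice_leaf(1,2)[OF assms(1) r(1)]
          index_choice_leaf(2)[OF assms(2) r(1)]] r(2) by blast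
qed

lemma Union_Yhat:
  "(\<Union>js\<in>{js\<in>index_choices F. nonbot (Yhat n F Xh js)}. gamma_n D (Yhat n F Xh js))
     = gamma_n D Xh"
proof (intro equalityI subsetI)
  fix x assume x: "x \<in> gamma_n D Xh"
  then have "x \<in> points D n"
    using gamma_n_subset_points input_Xh by (force simp: is_input_box_def)
  then have "\<exists>j<length (F ! r). x \<in> fst ((F ! r) ! j)" if "r < length F" for r
    using that by (meson is_tree_leaf_exists nth_mem trees)
  then obtain js where js: "js \<in> index_choices F" "\<forall>r<length F. x \<in> fst ((F ! r) ! (js ! r))"
    using index_choice_exists[where P = "\<lambda>r j. x \<in> fst ((F ! r) ! j)"] by blast
  then have "x \<in> gamma_n D (Yhat n F Xh js)" using x gamma_n_Yhat by auto
  with js(1) show "x \<in> (\<Union>js\<in>{js\<in>index_choices F. nonbot (Yhat n F Xh js)}.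
      gamma_n D (Yhat n F Xh js))"
    using nonbot_if_gamma_n_nonempty by blast
qed (auto simp: gamma_n_Yhat)

lemma ens_hat_Yhat_point:
  assumes "js \<in> index_choices F" "nonbot (Yhat n F Xh js)"
  shows "\<exists>y. ens_hat n m (Yhat n F Xh js) F = point_box y"
proof -
  let ?B = "Yhat n F Xh js"
  note ib = is_input_box_Yhat[OF assms(1)]
  have "\<exists>y. length y = m \<and> tree_hat n m ?B T = point_box y" if T_in: "T \<in> set F" for T
  proof -
    obtain r where r: "r < length F" "F ! r = T"
      using in_set_conv_nth[THEN iffD1, OF T_in] by blast
    note leaf = index_choice_leaf[OF assms(1) r(1)]
    have T: "is_tree D n m T" "leaves_are_boxes D n T" using trees T_in by auto
    have j0: "js ! r < length T" using leaf(2) r(2) by simp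
    have "gamma_n D ?B \<subseteq> fst (T ! (js ! r))"
      using gamma_n_Yhat[OF assms(1)] r by auto
    then have "tree_hat n m ?B T = point_box (snd (T ! (js ! r)))"
      using tree_hat_within_leaf[OF finite_D T ib _ j0] assms(2)
        gamma_n_nonempty_iff_nonbot[OF ib] by blast
    moreover have "length (snd (T ! (js ! r))) = m" using leaf r by (simp add: is_tree_def)
    ultimately show ?thesis by blast
  qed
  then obtain y
    where "\<And>T. T \<in> set F \<Longrightarrow> length (y T) = m \<and> tree_hat n m ?B T = point_box (y T)"
    by metis
  then show ?thesis using ens_hat_point_box by blast
qed

end

theorem mainTheorem6:
  fixes D :: "real set" and n m :: nat and F :: ensemble and Xh :: box
  assumes "finite D" and "D \<noteq> {}"
    and "\<forall>T\<in>set F. is_tree D n m T \<and> leaves_are_boxes D n T"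
    and "is_input_box D n Xh" and "nonbot Xh"
  shows "(\<forall>js\<in>index_choices F. nonbot (Yhat n F Xh js) \<longrightarrow>
            (\<exists>y. gamma_m (ens_hat n m (Yhat n F Xh js) F) = {y}))
       \<and> (\<forall>js\<in>index_choices F. \<forall>js'\<in>index_choices F.
            js \<noteq> js' \<and> nonbot (Yhat n F Xh js) \<and> nonbot (Yhat n F Xh js') \<longrightarrow>
            gamma_n D (Yhat n F Xh js) \<inter> gamma_n D (Yhat n F Xh js') = {})
       \<and> (\<Union>js\<in>{js\<in>index_choices F. nonbot (Yhat n F Xh js)}. gamma_n D (Yhat n F Xh js))
            = gamma_n D Xh"
  using ens_hat_Yhat_point[OF assms(1,3,4)] gamma_m_point_box
    Yhat_disjoint[OF assms(1,3,4)] Union_Yhat[OF assms(1,3,4)]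
  by metis

end
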